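(* Consider REFORM with the RPTSC reward scheme with at most $k=2$ pairings and no decay ($\beta\equiv1$), with scale $\alpha>0$, $n$ tasks and beliefs as in the context. For a trustworthy agent $a_i$, REFORM with RPTSC is $\gamma$-fair with $$\frac{1}{\gamma}=\alpha\sum_{x_i\in\mathcal{X}}(1-r\,q'_{x_i})(1-q'_{x_i})\left(1-(1-q_{x_i})^{n-1}\right).$$
   Context: REFORM with RPTSC reward: agent $a_i$ on task $\tau$ reports $y_i$ in finite answer space $\mathcal{X}$; $n-1$ reports are sampled, one from each other task, and $f(y_i)$ is the fraction equal to $y_i$. A random peer on $\tau$ with report $y_p$ and reputation (TERM) score $\Omega_p$ is chosen: if $y_i=y_p$ the reward is $\alpha(1/f(y_i)-1)$; otherwise, if $\Omega_i\le\Omega_p$ or two pairings have been used, the reward is $-\alpha$ (or $0$ if $f(y_i)=0$); otherwise a second peer is drawn. Beliefs: $q_x\in(0,1)$ is the probability that a peer reports $x$ (also the probability with which $a_i$'s evaluation is $x$); $q'_x\in(0,1)$ is the probability that a peer on the same task reports $x$ given $a_i$'s evaluation is $x$; $r\in[0,1]$ is the probability that a random peer's TERM score is below $\Omega_i$, the same for every peer. For a trustworthy agent with evaluation (and report) $x$, its expected reward is $E^*(x)=\alpha\left[\frac{q'_x}{q_x}-1+r(1-q'_x)\frac{q'_x}{q_x}\right]\left[1-(1-q_x)^{n-1}\right]$ and its optimal reward (when its report matches the peer's) is $M^*(x)=\alpha\left(\frac{1}{q_x}-1\right)\left(1-(1-q_x)^{n-1}\right)$. $\gamma$-fairness: a peer-based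 mechanism is $\gamma$-fair if, for a trustworthy agent, $\mathbb{E}_{x\in\mathcal{X}}[M^*-E^*]=\frac{1}{\gamma}$, the expectation taken over the agent's evaluation $x$ distributed according to $q_x$. *)

theory Defs
  imports Complex_Main
begin

text \<open>Expected reward of a trustworthy agent with evaluation (= report) x under
REFORM with RPTSC (k = 2 pairings, no decay).\<close>
definition E_star :: "real \<Rightarrow> real \<Rightarrow> nat \<Rightarrow> ('a \<Rightarrow> real) \<Rightarrow> ('a \<Rightarrow> real) \<Rightarrow> 'a \<Rightarrow> real" where
  "E_star \<alpha> r n q q' x =
     \<alpha> * (q' x / q x - 1 + r * (1 - q' x) * (q' x / q x)) * (1 - (1 - q x) ^ (n - 1))"

text \<open>Optimal reward (report matches the peer's).\<close>
definition M_star :: "real \<Rightarrow> nat \<Rightarrow> ('a \<Rightarrow> real) \<Rightarrow> 'a \<Rightarrow> real" where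
  "M_star \<alpha> n q x = \<alpha> * (1 / q x - 1) * (1 - (1 - q x) ^ (n - 1))"

definition gamma_fair :: "'a set \<Rightarrow> ('a \<Rightarrow> real) \<Rightarrow> ('a \<Rightarrow> real) \<Rightarrow> ('a \<Rightarrow> real) \<Rightarrow> real \<Rightarrow> bool" where
  "gamma_fair X q M E \<gamma> \<longleftrightarrow> (\<Sum>x\<in>X. q x * (M x - E x)) = 1 / \<gamma>"

end

theory Submission
  imports Defs
begin

text \<open>Weighting by \<open>q x\<close> clears every \<open>1 / q x\<close>: the bracket
  \<open>q x (1/q x - 1) - q x (q' x/q x - 1 + r (1 - q' x) q' x/q x)\<close> collapses to
  \<open>(1 - q' x) (1 - r q' x)\<close>, so the expected regret is a plain sum of these terms.\<close>

lemma q_mult_M_star_minus_E_star: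
  assumes "q x \<noteq> 0"
  shows "q x * (M_star \<alpha> n q x - E_star \<alpha> r n q q' x)
    = \<alpha> * ((1 - r * q' x) * (1 - q' x) * (1 - (1 - q x) ^ (n - 1)))"
  using assms unfolding M_star_def E_star_def by (simp add: field_simps)

theorem proposition4:
  fixes X :: "'a set" and q q' :: "'a \<Rightarrow> real" and r \<alpha> \<gamma> :: real and n :: nat
  assumes "finite X" and "X \<noteq> {}"
    and "\<alpha> > 0" and "n \<ge> 1"
    and "\<forall>x\<in>X. 0 < q x \<and> q x < 1"
    and "\<forall>x\<in>X. 0 < q' x \<and> q' x < 1"
    and "(\<Sum>x\<in>X. q x) = 1"
    and "0 \<le> r" and "r \<le> 1"
    and "1 / \<gamma> = \<alpha> * (\<Sum>x\<in>X. (1 - r * q' x) * (1 - q' x) * (1 - (1 - q x) ^ (n - 1)))"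
  shows "gamma_fair X q (M_star \<alpha> n q) (E_star \<alpha> r n q q') \<gamma>"
proof -
  have "(\<Sum>x\<in>X. q x * (M_star \<alpha> n q x - E_star \<alpha> r n q q' x))
      = (\<Sum>x\<in>X. \<alpha> * ((1 - r * q' x) * (1 - q' x) * (1 - (1 - q x) ^ (n - 1))))"
    using assms(5) by (intro sum.cong refl q_mult_M_star_minus_E_star) force
  also have "\<dots> = 1 / \<gamma>"
    using assms(10) by (simp add: sum_distrib_left)
  finally show ?thesis
    unfolding gamma_fair_def .
qed

end
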